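(* Let $A$ be an infinite set, fix $z\in A$, $A'=A\setminus\{z\}$, and $p\in[1,\infty)$. The map $p_p:N(A)\to l^p(A)$ is continuous.
   Context: $l^p(A)$ is the set of families $x=(x_a)_{a\in A'}$ of real numbers with $x_a=0$ for all but countably many $a$ and $\sum_a|x_a|^p<\infty$, with metric $d_p(x,y)=(\sum_a|x_a-y_a|^p)^{1/p}$. $N(A)$ is the set of all sequences $\alpha=a_1a_2a_3\ldots$ with $a_k\in A$, with metric $d(v,v')=1/k$ where $k$ is the first index at which $v,v'$ differ, and $d(v,v)=0$. The map $p_p$ is $p_p(\alpha)=(\alpha_b)_{b\in A'}$ where, for $\alpha=a_1a_2\ldots$, $\alpha_b=\sum_{k:\,a_k=b}2^{-k}$ (and $\alpha_b=0$ if no $a_k$ equals $b$). *)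

theory Defs
  imports "HOL-Analysis.Analysis"
begin

text \<open>Sequences a_1 a_2 a_3 ... are represented as functions nat => 'a, with
  a_(k+1) = alpha k (0-based indexing).\<close>

definition seqspace :: "'a set \<Rightarrow> (nat \<Rightarrow> 'a) set" where
  "seqspace A = {\<alpha>. \<forall>k. \<alpha> k \<in> A}"

definition seqdist :: "(nat \<Rightarrow> 'a) \<Rightarrow> (nat \<Rightarrow> 'a) \<Rightarrow> real" where
  "seqdist v w = (if v = w then 0 else 1 / real (Suc (LEAST k. v k \<noteq> w k)))"

definition lp :: "'a set \<Rightarrow> real \<Rightarrow> ('a \<Rightarrow> real) set" where
  "lp A' p = {x. (\<forall>a. a \<notin> A' \<longrightarrow> x a = 0) \<and> countable {a\<in>A'. x a \<noteq> 0}
                 \<and> (\<lambda>a. \<bar>x a\<bar> powr p) summable_on A'}"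

definition lpdist :: "'a set \<Rightarrow> real \<Rightarrow> ('a \<Rightarrow> real) \<Rightarrow> ('a \<Rightarrow> real) \<Rightarrow> real" where
  "lpdist A' p x y = (infsum (\<lambda>a. \<bar>x a - y a\<bar> powr p) A') powr (1 / p)"

text \<open>p_p(alpha)_b = sum over k with a_k = b of 2^(-k) (1-based k).\<close>
definition pmap :: "'a set \<Rightarrow> (nat \<Rightarrow> 'a) \<Rightarrow> 'a \<Rightarrow> real" where
  "pmap A' \<alpha> = (\<lambda>b. if b \<in> A' then infsum (\<lambda>k. (1/2::real) ^ Suc k) {k. \<alpha> k = b} else 0)"

end

theory Submission
  imports Defs
begin

text \<open>Coordinate b of \<open>pmap A' \<alpha>\<close> is the dyadic mass of the fibre of \<alpha> over b, and the masses
  of disjoint index sets add up to at most 1. Since every coordinate lies in [0,1] and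
  p \<ge> 1, the p-th powers are dominated by the coordinates themselves, so \<open>pmap A' \<alpha>\<close> is in
  l^p. If \<alpha> and \<beta> agree on the first N indices, their fibres only differ at indices \<ge> N,
  whose total mass is at most 2^-N; hence the l^p sum of the difference is at most 2 \<cdot> 2^-N.\<close>

definition dyadic_mass :: "nat set \<Rightarrow> real" where
  "dyadic_mass K = infsum (\<lambda>k. (1/2) ^ Suc k) K"

lemma nonneg_bounded_sums_summable_on:
  fixes f :: "'b \<Rightarrow> real"
  assumes "\<And>x. x \<in> A \<Longrightarrow> 0 \<le> f x"
    and "\<And>F. finite F \<Longrightarrow> F \<subseteq> A \<Longrightarrow> sum f F \<le> B"
  shows "f summable_on A" and "infsum f A \<le> B"
proof -
  show summable: "f summable_on A"
    by (rule nonneg_bdd_above_summable_on) (use assms in \<open>auto intro!: bdd_aboveI2\<close>)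
  show "infsum f A \<le> B"
    using infsum_le_finite_sums[OF summable] assms(2) by blast
qed

lemma sum_half_power_atLeastLessThan:
  "N \<le> M \<Longrightarrow> (\<Sum>k=N..<M. (1/2::real) ^ Suc k) = (1/2) ^ N - (1/2) ^ M"
proof (induction M)
  case (Suc M)
  then show ?case
    by (cases "N = Suc M") (simp_all add: sum.atLeastLessThan_Suc)
qed simp

lemma dyadic_mass_tail:
  assumes "K \<subseteq> {N..}"
  shows "(\<lambda>k. (1/2::real) ^ Suc k) summable_on K" and "dyadic_mass K \<le> (1/2) ^ N"
proof -
  have "sum (\<lambda>k. (1/2::real) ^ Suc k) F \<le> (1/2) ^ N" if "finite F" "F \<subseteq> K" for F
  proof -
    define M where "M = Suc (Max (insert N F))"
    have "F \<subseteq> {N..<M}"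
      using that assms unfolding M_def by (auto simp: less_Suc_eq_le)
    then have "sum (\<lambda>k. (1/2::real) ^ Suc k) F \<le> (\<Sum>k=N..<M. (1/2) ^ Suc k)"
      by (intro sum_mono2) auto
    also have "\<dots> = (1/2) ^ N - (1/2) ^ M"
      by (rule sum_half_power_atLeastLessThan) (simp add: M_def le_SucI that(1))
    also have "\<dots> \<le> (1/2) ^ N"
      by simp
    finally show ?thesis .
  qed
  then show "(\<lambda>k. (1/2::real) ^ Suc k) summable_on K" and "dyadic_mass K \<le> (1/2) ^ N"
    using nonneg_bounded_sums_summable_on[of K "\<lambda>k. (1/2::real) ^ Suc k" "(1/2) ^ N"]
    unfolding dyadic_mass_def by auto
qed

lemma summable_on_half_power: "(\<lambda>k. (1/2::real) ^ Suc k) summable_on K"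
  using dyadic_mass_tail(1)[of K 0] by simp

lemma dyadic_mass_le_1: "dyadic_mass K \<le> 1"
  using dyadic_mass_tail(2)[of K 0] by simp

lemma dyadic_mass_nonneg: "0 \<le> dyadic_mass K"
  unfolding dyadic_mass_def by (rule infsum_nonneg) simp

lemma dyadic_mass_Un_disjoint:
  "K \<inter> L = {} \<Longrightarrow> dyadic_mass (K \<union> L) = dyadic_mass K + dyadic_mass L"
  unfolding dyadic_mass_def
  by (rule infsum_Un_disjoint[OF summable_on_half_power summable_on_half_power])

lemma sum_dyadic_mass_fibres:
  assumes "finite F"
  shows "(\<Sum>b\<in>F. dyadic_mass {k\<in>K. \<alpha> k = b}) = dyadic_mass {k\<in>K. \<alpha> k \<in> F}"
  using assms
proof (induction F rule: finite_induct)
  case (insert b F)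
  have "{k\<in>K. \<alpha> k \<in> insert b F} = {k\<in>K. \<alpha> k = b} \<union> {k\<in>K. \<alpha> k \<in> F}"
    by auto
  with insert show ?case
    by (simp add: dyadic_mass_Un_disjoint disjoint_iff)
qed (simp add: dyadic_mass_def)

lemma pmap_eq: "pmap A' \<alpha> b = (if b \<in> A' then dyadic_mass {k. \<alpha> k = b} else 0)"
  unfolding pmap_def dyadic_mass_def ..

lemma pmap_nonneg: "0 \<le> pmap A' \<alpha> b"
  by (simp add: pmap_eq dyadic_mass_nonneg)

lemma pmap_le_1: "pmap A' \<alpha> b \<le> 1"
  by (simp add: pmap_eq dyadic_mass_le_1)

lemma powr_le_self: "0 \<le> (t::real) \<Longrightarrow> t \<le> 1 \<Longrightarrow> 1 \<le> p \<Longrightarrow> t powr p \<le> t"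
  by (metis powr_one powr_mono')

lemma pmap_in_lp:
  assumes "1 \<le> p"
  shows "pmap A' \<alpha> \<in> lp A' p"
proof -
  have "{a\<in>A'. pmap A' \<alpha> a \<noteq> 0} \<subseteq> range \<alpha>"
  proof (rule subsetI, rule ccontr)
    fix a assume a: "a \<in> {a\<in>A'. pmap A' \<alpha> a \<noteq> 0}" "a \<notin> range \<alpha>"
    from a(2) have "{k. \<alpha> k = a} = {}"
      by auto
    then have "pmap A' \<alpha> a = 0"
      by (simp only: pmap_eq dyadic_mass_def) simp
    with a(1) show False
      by simp
  qed
  then have countable: "countable {a\<in>A'. pmap A' \<alpha> a \<noteq> 0}"
    by (rule countable_subset) simp
  have "(\<Sum>a\<in>F. \<bar>pmap A' \<alpha> a\<bar> powr p) \<le> 1" if "finite F" "F \<subseteq> A'" for F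
  proof -
    have "(\<Sum>a\<in>F. \<bar>pmap A' \<alpha> a\<bar> powr p) \<le> (\<Sum>a\<in>F. pmap A' \<alpha> a)"
      by (intro sum_mono) (simp add: pmap_nonneg pmap_le_1 powr_le_self assms)
    also have "\<dots> = (\<Sum>b\<in>F. dyadic_mass {k\<in>UNIV. \<alpha> k = b})"
      using that by (intro sum.cong) (auto simp: pmap_eq)
    also have "\<dots> = dyadic_mass {k\<in>UNIV. \<alpha> k \<in> F}"
      by (rule sum_dyadic_mass_fibres[OF that(1)])
    also have "\<dots> \<le> 1"
      by (rule dyadic_mass_le_1)
    finally show ?thesis .
  qed
  then have "(\<lambda>a. \<bar>pmap A' \<alpha> a\<bar> powr p) summable_on A'"
    using nonneg_bounded_sums_summable_on(1)[of A' "\<lambda>a. \<bar>pmap A' \<alpha> a\<bar> powr p" 1] by auto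
  with countable show ?thesis
    unfolding lp_def by (auto simp: pmap_def)
qed

lemma seqdist_less_imp_eq_prefix:
  assumes "seqdist \<alpha> \<beta> < 1 / real (Suc N)" and "k < N"
  shows "\<alpha> k = \<beta> k"
proof (cases "\<alpha> = \<beta>")
  case False
  define L where "L = (LEAST k. \<alpha> k \<noteq> \<beta> k)"
  have "1 / real (Suc L) < 1 / real (Suc N)"
    using assms(1) False unfolding seqdist_def L_def by simp
  then have "N < L"
    by (simp add: inverse_less_iff_less[symmetric] del: of_nat_Suc)
  with assms(2) have "k < (LEAST k. \<alpha> k \<noteq> \<beta> k)"
    unfolding L_def by simp
  then show ?thesis
    using not_less_Least by blast
qed simp

lemma pmap_diff_le_tail_masses:
  assumes "\<And>k. k < N \<Longrightarrow> \<alpha> k = \<beta> k"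
  shows "\<bar>pmap A' \<alpha> b - pmap A' \<beta> b\<bar>
           \<le> dyadic_mass {k\<in>{N..}. \<alpha> k = b} + dyadic_mass {k\<in>{N..}. \<beta> k = b}"
proof -
  have fibre: "dyadic_mass {k. \<gamma> k = b}
      = dyadic_mass {k. k < N \<and> \<alpha> k = b} + dyadic_mass {k\<in>{N..}. \<gamma> k = b}"
    if "\<And>k. k < N \<Longrightarrow> \<gamma> k = \<alpha> k" for \<gamma>
  proof -
    have "{k. \<gamma> k = b} = {k. k < N \<and> \<alpha> k = b} \<union> {k\<in>{N..}. \<gamma> k = b}"
      using that by auto
    then show ?thesis
      by (simp add: dyadic_mass_Un_disjoint disjoint_iff)
  qed
  have "\<bar>pmap A' \<alpha> b - pmap A' \<beta> b\<bar>
      \<le> \<bar>dyadic_mass {k\<in>{N..}. \<alpha> k = b} - dyadic_mass {k\<in>{N..}. \<beta> k = b}\<bar>"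
    using fibre[of \<alpha>] fibre[of \<beta>] assms by (simp add: pmap_eq)
  then show ?thesis
    using dyadic_mass_nonneg[of "{k\<in>{N..}. \<alpha> k = b}"]
      dyadic_mass_nonneg[of "{k\<in>{N..}. \<beta> k = b}"] by linarith
qed

lemma lp_sum_pmap_diff_le:
  assumes "1 \<le> p" and "\<And>k. k < N \<Longrightarrow> \<alpha> k = \<beta> k"
  shows "infsum (\<lambda>a. \<bar>pmap A' \<alpha> a - pmap A' \<beta> a\<bar> powr p) A' \<le> 2 * (1/2) ^ N"
proof (rule nonneg_bounded_sums_summable_on(2))
  fix F assume F: "finite F" "F \<subseteq> A'"
  let ?tail = "\<lambda>\<gamma> b. dyadic_mass {k\<in>{N..}. \<gamma> k = b}"
  have "(\<Sum>b\<in>F. \<bar>pmap A' \<alpha> b - pmap A' \<beta> b\<bar> powr p) \<le> (\<Sum>b\<in>F. ?tail \<alpha> b + ?tail \<beta> b)"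
  proof (intro sum_mono)
    fix b
    have "\<bar>pmap A' \<alpha> b - pmap A' \<beta> b\<bar> \<le> 1"
      using pmap_nonneg[of A' \<alpha> b] pmap_le_1[of A' \<alpha> b]
        pmap_nonneg[of A' \<beta> b] pmap_le_1[of A' \<beta> b] by linarith
    then have "\<bar>pmap A' \<alpha> b - pmap A' \<beta> b\<bar> powr p \<le> \<bar>pmap A' \<alpha> b - pmap A' \<beta> b\<bar>"
      by (intro powr_le_self assms(1)) simp_all
    also have "\<dots> \<le> ?tail \<alpha> b + ?tail \<beta> b"
      by (rule pmap_diff_le_tail_masses[OF assms(2)])
    finally show "\<bar>pmap A' \<alpha> b - pmap A' \<beta> b\<bar> powr p \<le> ?tail \<alpha> b + ?tail \<beta> b" .
  qed
  also have "\<dots> = dyadic_mass {k\<in>{N..}. \<alpha> k \<in> F} + dyadic_mass {k\<in>{N..}. \<beta> k \<in> F}"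
    by (simp only: sum.distrib sum_dyadic_mass_fibres[OF F(1)])
  also have "\<dots> \<le> (1/2) ^ N + (1/2) ^ N"
    by (intro add_mono dyadic_mass_tail(2)) auto
  finally show "(\<Sum>b\<in>F. \<bar>pmap A' \<alpha> b - pmap A' \<beta> b\<bar> powr p) \<le> 2 * (1/2) ^ N"
    by simp
qed simp

lemma lpdist_less_if_sum_less:
  assumes "0 < p" and "0 < \<epsilon>" and "infsum (\<lambda>a. \<bar>x a - y a\<bar> powr p) A' < \<epsilon> powr p"
  shows "lpdist A' p x y < \<epsilon>"
proof -
  have "0 \<le> infsum (\<lambda>a. \<bar>x a - y a\<bar> powr p) A'"
    by (rule infsum_nonneg) simp
  with assms have "lpdist A' p x y < (\<epsilon> powr p) powr (1/p)"
    unfolding lpdist_def by (intro powr_less_mono2) auto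
  also have "\<dots> = \<epsilon>"
    using assms(1,2) by (simp add: powr_powr)
  finally show ?thesis .
qed

theorem proposition3p2:
  fixes A :: "'a set" and z :: 'a and p :: real
  assumes "infinite A" and "z \<in> A" and "1 \<le> p"
  shows "(\<forall>\<alpha>\<in>seqspace A. pmap (A - {z}) \<alpha> \<in> lp (A - {z}) p) \<and>
         (\<forall>\<alpha>\<in>seqspace A. \<forall>\<epsilon>>0. \<exists>\<delta>>0. \<forall>\<beta>\<in>seqspace A.
            seqdist \<alpha> \<beta> < \<delta> \<longrightarrow>
            lpdist (A - {z}) p (pmap (A - {z}) \<alpha>) (pmap (A - {z}) \<beta>) < \<epsilon>)"
proof (intro conjI ballI allI impI)
  show "pmap (A - {z}) \<alpha> \<in> lp (A - {z}) p" for \<alpha>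
    using pmap_in_lp[OF assms(3)] .
next
  fix \<alpha> :: "nat \<Rightarrow> 'a" and \<epsilon> :: real
  assume "0 < \<epsilon>"
  then obtain N where N: "(1/2::real) ^ N < \<epsilon> powr p / 2"
    using real_arch_pow_inv[of "\<epsilon> powr p / 2" "1/2::real"] by auto
  have "lpdist (A - {z}) p (pmap (A - {z}) \<alpha>) (pmap (A - {z}) \<beta>) < \<epsilon>"
    if "seqdist \<alpha> \<beta> < 1 / real (Suc N)" for \<beta>
  proof (rule lpdist_less_if_sum_less)
    have "infsum (\<lambda>a. \<bar>pmap (A - {z}) \<alpha> a - pmap (A - {z}) \<beta> a\<bar> powr p) (A - {z})
        \<le> 2 * (1/2) ^ N"
      using lp_sum_pmap_diff_le[OF assms(3) seqdist_less_imp_eq_prefix[OF that]] .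
    with N show "infsum (\<lambda>a. \<bar>pmap (A - {z}) \<alpha> a - pmap (A - {z}) \<beta> a\<bar> powr p) (A - {z})
        < \<epsilon> powr p"
      by linarith
  qed (use \<open>0 < \<epsilon>\<close> assms(3) in auto)
  then show "\<exists>\<delta>>0. \<forall>\<beta>\<in>seqspace A. seqdist \<alpha> \<beta> < \<delta> \<longrightarrow>
      lpdist (A - {z}) p (pmap (A - {z}) \<alpha>) (pmap (A - {z}) \<beta>) < \<epsilon>"
    by (intro exI[of _ "1 / real (Suc N)"]) auto
qed

end
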